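(* Let $(X,d)$ be a complete Busemann convex geodesic metric space which is uniformly convex with a modulus of uniform convexity that is monotone or lower semicontinuous from the right. Let $(A,B)$ be a closed convex pair of subsets of $X$ with $B$ bounded, and let $T:A\cup B\to A\cup B$ be a noncyclic relatively nonexpansive mapping. Then there exists $(x,y)\in A\times B$ such that $x=Tx$, $y=Ty$ and $d(x,y)=\operatorname{dist}(A,B)$.
   Context: $\operatorname{dist}(A,B)=\inf\{d(x,y):x\in A,y\in B\}$. A geodesic space is one in which any two points are joined by a geodesic segment; a subset is convex if it contains every geodesic segment joining two of its points. $X$ is Busemann convex if for any geodesics $c_1:[0,l_1]\to X$, $c_2:[0,l_2]\to X$, $d(c_1(tl_1),c_2(tl_2))\le (1-t)d(c_1(0),c_2(0))+t\,d(c_1(l_1),c_2(l_2))$ for all $t\in[0,1]$. $X$ is uniformly convex if for every $r>0$ and $\varepsilon\in(0,2]$ there is $\delta\in(0,1]$ such that for all $a,x,y$ with $d(x,a)\le r$, $d(y,a)\le r$, $d(x,y)\ge\varepsilon r$, every midpoint $m$ of $x,y$ satisfies $d(m,a)\le(1-\delta)r$; a function $\delta(r,\varepsilon)$ providing such $\delta$ is a modulus of uniform convexity; it is monotone if it is decreasing in $r$ for each fixed $\varepsilon$, and lower semicontinuous from the right if it is lower semicontinuous from the right in $r$ for each fixed $\varepsilon$. $T$ is relatively nonexpansive if $d(Tx,Ty)\le d(x,y)$ for all $x\in A$, $y\in B$, and noncyclic if $T(A)\subseteq A$, $T(B)\subseteq B$. *)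

theory Defs
  imports "HOL-Analysis.Analysis"
begin

definition geodesic :: "(real \<Rightarrow> 'a::metric_space) \<Rightarrow> real \<Rightarrow> bool" where
  "geodesic c l \<longleftrightarrow> 0 \<le> l \<and> (\<forall>s\<in>{0..l}. \<forall>t\<in>{0..l}. dist (c s) (c t) = \<bar>s - t\<bar>)"

definition geodesic_between :: "(real \<Rightarrow> 'a::metric_space) \<Rightarrow> real \<Rightarrow> 'a \<Rightarrow> 'a \<Rightarrow> bool" where
  "geodesic_between c l x y \<longleftrightarrow> geodesic c l \<and> c 0 = x \<and> c l = y"

definition geodesic_space :: "'a::metric_space itself \<Rightarrow> bool" where
  "geodesic_space _ \<longleftrightarrow> (\<forall>x y::'a. \<exists>c l. geodesic_between c l x y)"

definition geo_convex :: "'a::metric_space set \<Rightarrow> bool" where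
  "geo_convex S \<longleftrightarrow> (\<forall>x\<in>S. \<forall>y\<in>S. \<forall>c l. geodesic_between c l x y \<longrightarrow> c ` {0..l} \<subseteq> S)"

definition busemann_convex :: "'a::metric_space itself \<Rightarrow> bool" where
  "busemann_convex _ \<longleftrightarrow>
     (\<forall>(c1::real \<Rightarrow> 'a) l1 (c2::real \<Rightarrow> 'a) l2. geodesic c1 l1 \<longrightarrow> geodesic c2 l2 \<longrightarrow>
        (\<forall>t\<in>{0..1}. dist (c1 (t * l1)) (c2 (t * l2))
            \<le> (1 - t) * dist (c1 0) (c2 0) + t * dist (c1 l1) (c2 l2)))"

definition is_midpoint :: "'a::metric_space \<Rightarrow> 'a \<Rightarrow> 'a \<Rightarrow> bool" where
  "is_midpoint m x y \<longleftrightarrow> dist x m = dist x y / 2 \<and> dist m y = dist x y / 2"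

definition modulus_uc :: "'a::metric_space itself \<Rightarrow> (real \<Rightarrow> real \<Rightarrow> real) \<Rightarrow> bool" where
  "modulus_uc _ \<delta> \<longleftrightarrow>
     (\<forall>r>0. \<forall>\<epsilon>\<in>{0<..2}. 0 < \<delta> r \<epsilon> \<and> \<delta> r \<epsilon> \<le> 1 \<and>
        (\<forall>a x y m :: 'a. dist x a \<le> r \<longrightarrow> dist y a \<le> r \<longrightarrow> dist x y \<ge> \<epsilon> * r \<longrightarrow>
            is_midpoint m x y \<longrightarrow> dist m a \<le> (1 - \<delta> r \<epsilon>) * r))"

definition monotone_modulus :: "(real \<Rightarrow> real \<Rightarrow> real) \<Rightarrow> bool" where
  "monotone_modulus \<delta> \<longleftrightarrow> (\<forall>\<epsilon>\<in>{0<..2}. \<forall>r s. 0 < r \<longrightarrow> r \<le> s \<longrightarrow> \<delta> s \<epsilon> \<le> \<delta> r \<epsilon>)"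

definition lsc_right_modulus :: "(real \<Rightarrow> real \<Rightarrow> real) \<Rightarrow> bool" where
  "lsc_right_modulus \<delta> \<longleftrightarrow> (\<forall>\<epsilon>\<in>{0<..2}. \<forall>r>0. \<forall>e>0. \<exists>\<eta>>0.
       \<forall>s. r \<le> s \<longrightarrow> s < r + \<eta> \<longrightarrow> \<delta> r \<epsilon> - e < \<delta> s \<epsilon>)"

definition relatively_nonexpansive :: "('a::metric_space \<Rightarrow> 'a) \<Rightarrow> 'a set \<Rightarrow> 'a set \<Rightarrow> bool" where
  "relatively_nonexpansive T A B \<longleftrightarrow> (\<forall>x\<in>A. \<forall>y\<in>B. dist (T x) (T y) \<le> dist x y)"

definition noncyclic :: "('a \<Rightarrow> 'a) \<Rightarrow> 'a set \<Rightarrow> 'a set \<Rightarrow> bool" where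
  "noncyclic T A B \<longleftrightarrow> T ` A \<subseteq> A \<and> T ` B \<subseteq> B"

end

theory Submission
  imports Defs
begin

text \<open>
  With a monotone or right lower semicontinuous modulus, uniform convexity holds uniformly in
  the radius: if x and y lie within \<rho> + \<eta> of a point and their midpoint stays at distance at
  least \<rho> - \<eta> from it, then x and y are close. Hence minimising sequences of convex problems
  are Cauchy: decreasing sequences of nonempty bounded closed convex sets meet, continuous
  quasiconvex functions attain their infimum on bounded closed convex sets, and the asymptotic
  radius r(z) = limsup d(z, x_n) of a bounded sequence has exactly one minimiser, its
  asymptotic centre, on every nonempty closed convex set. A self-map of that set which does not
  increase r must fix the centre.

  The points of B at distance dist(A,B) from A form a nonempty closed convex T-invariant set.
  A T-orbit in A is bounded, since it shadows a T-orbit in B, and relative nonexpansiveness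
  says that T does not increase its asymptotic radius on B; this yields y = Ty with
  d(y, A) = dist(A,B). For the constant sequence y the asymptotic centre in A is the nearest
  point x of A to y, so again x = Tx, and d(x, y) = dist(A,B).
\<close>

lemma geodesic_between_const: "geodesic_between (\<lambda>_. a) 0 a a"
  by (simp add: geodesic_between_def geodesic_def)

lemma geodesic_betweenD:
  assumes "geodesic_between c l x y"
  shows "0 \<le> l" "c 0 = x" "c l = y"
    and "\<And>s t. s \<in> {0..l} \<Longrightarrow> t \<in> {0..l} \<Longrightarrow> dist (c s) (c t) = \<bar>s - t\<bar>"
  using assms unfolding geodesic_between_def geodesic_def by auto

lemma geodesic_between_rescale:
  assumes "geodesic_between c l x y" "s \<in> {0..l}"
  obtains t where "t \<in> {0..1}" "c s = c (t * l)"
proof (cases "l = 0")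
  case True
  then show ?thesis using assms(2) that[of 0] by simp
next
  case False
  then have "l > 0" using geodesic_betweenD(1)[OF assms(1)] by simp
  then show ?thesis using assms(2) that[of "s / l"] by (auto simp: field_simps)
qed

lemma busemann_convex_geodesics_close:
  assumes "busemann_convex TYPE('a::metric_space)"
    and "geodesic_between (c::real \<Rightarrow> 'a) l x y" "geodesic_between c' l' x' y'" "s \<in> {0..l}"
  obtains s' where "s' \<in> {0..l'}" "dist (c s) (c' s') \<le> max (dist x x') (dist y y')"
proof -
  obtain t where t: "t \<in> {0..1}" "c s = c (t * l)"
    using geodesic_between_rescale[OF assms(2,4)] by blast
  have "geodesic c l" "geodesic c' l'"
    using assms(2,3) unfolding geodesic_between_def by auto
  then have "dist (c (t * l)) (c' (t * l')) \<le> (1 - t) * dist (c 0) (c' 0) + t * dist (c l) (c' l')"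
    using assms(1) t(1) unfolding busemann_convex_def by blast
  also have "\<dots> \<le> max (dist x x') (dist y y')"
    using t(1) geodesic_betweenD(2,3)[OF assms(2)] geodesic_betweenD(2,3)[OF assms(3)]
    by (intro convex_bound_le) auto
  finally show ?thesis
    using that[of "t * l'"] t geodesic_betweenD(1)[OF assms(3)] by (simp add: mult_left_le_one_le)
qed

lemma geo_convex_midpoint:
  assumes "geodesic_space TYPE('a::metric_space)" "geo_convex K" "x \<in> K" "y \<in> K"
  obtains m where "m \<in> K" "is_midpoint m (x::'a) y"
proof -
  obtain c l where g: "geodesic_between c l x y"
    using assms(1) unfolding geodesic_space_def by blast
  have "c (l/2) \<in> K"
    using assms(2-4) g geodesic_betweenD(1)[OF g] unfolding geo_convex_def by fastforce
  moreover have "is_midpoint (c (l/2)) x y"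
  proof -
    have "l/2 \<in> {0..l}" "0 \<in> {0..l}" "l \<in> {0..l}" using geodesic_betweenD(1)[OF g] by auto
    then show ?thesis
      using geodesic_betweenD(2-4)[OF g] unfolding is_midpoint_def by force
  qed
  ultimately show ?thesis using that by blast
qed

definition geo_quasiconvex_on :: "'a::metric_space set \<Rightarrow> ('a \<Rightarrow> real) \<Rightarrow> bool" where
  "geo_quasiconvex_on K f \<longleftrightarrow>
     (\<forall>x\<in>K. \<forall>y\<in>K. \<forall>c l. geodesic_between c l x y \<longrightarrow> (\<forall>s\<in>{0..l}. f (c s) \<le> max (f x) (f y)))"

lemma geo_convex_sublevel:
  assumes "geo_convex K" "geo_quasiconvex_on K f"
  shows "geo_convex {x\<in>K. f x \<le> r}"
  using assms unfolding geo_convex_def geo_quasiconvex_on_def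
  by (smt (verit, ccfv_threshold) image_subset_iff mem_Collect_eq)

lemma infdist_ltE:
  assumes "infdist x A < b" "A \<noteq> {}"
  obtains a where "a \<in> A" "dist x a < b"
  using assms by (auto simp: infdist_notempty cINF_less_iff)

lemma geo_quasiconvex_on_infdist:
  fixes A :: "'a::metric_space set"
  assumes "geodesic_space TYPE('a)" "busemann_convex TYPE('a)" "geo_convex A"
  shows "geo_quasiconvex_on S (\<lambda>y. infdist y A)"
  unfolding geo_quasiconvex_on_def
proof (intro ballI allI impI)
  fix y1 y2 and c :: "real \<Rightarrow> 'a" and l s
  assume g: "geodesic_between c l y1 y2" and s: "s \<in> {0..l}"
  show "infdist (c s) A \<le> max (infdist y1 A) (infdist y2 A)"
  proof (cases "A = {}")
    case False
    show ?thesis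
    proof (rule field_le_epsilon)
      fix e :: real assume "0 < e"
      then obtain a1 a2 where a: "a1 \<in> A" "a2 \<in> A"
        and "dist y1 a1 < infdist y1 A + e" "dist y2 a2 < infdist y2 A + e"
        using infdist_ltE[OF _ False] by (metis less_add_same_cancel1)
      then have close: "max (dist y1 a1) (dist y2 a2) \<le> max (infdist y1 A) (infdist y2 A) + e"
        by linarith
      obtain c' l' where g': "geodesic_between c' l' a1 a2"
        using assms(1) unfolding geodesic_space_def by blast
      obtain s' where s': "s' \<in> {0..l'}" "dist (c s) (c' s') \<le> max (dist y1 a1) (dist y2 a2)"
        using busemann_convex_geodesics_close[OF assms(2) g g' s] by blast
      have "c' s' \<in> A" using assms(3) a g' s'(1) unfolding geo_convex_def by blast
      then show "infdist (c s) A \<le> max (infdist y1 A) (infdist y2 A) + e"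
        using s'(2) close by (meson infdist_le2 order_trans)
    qed
  qed (simp add: infdist_def)
qed

lemma modulus_uc_bounded_below_right:
  assumes U: "modulus_uc TYPE('a::metric_space) \<delta>" and M: "monotone_modulus \<delta> \<or> lsc_right_modulus \<delta>"
    and "\<rho> > 0" and \<epsilon>: "\<epsilon> \<in> {0<..2}"
  obtains d h where "d > 0" "h > 0" "\<And>s. \<rho> \<le> s \<Longrightarrow> s < \<rho> + h \<Longrightarrow> d \<le> \<delta> s \<epsilon>"
proof (cases "monotone_modulus \<delta>")
  case True
  have "0 < \<delta> (\<rho> + 1) \<epsilon>" using U \<epsilon> \<open>\<rho> > 0\<close> unfolding modulus_uc_def by auto
  moreover have "\<delta> (\<rho> + 1) \<epsilon> \<le> \<delta> s \<epsilon>" if "\<rho> \<le> s" "s < \<rho> + 1" for s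
    using True \<epsilon> \<open>\<rho> > 0\<close> that unfolding monotone_modulus_def by auto
  ultimately show ?thesis using that[of "\<delta> (\<rho> + 1) \<epsilon>" 1] by auto
next
  case False
  then have "lsc_right_modulus \<delta>" using M by blast
  moreover have pos: "0 < \<delta> \<rho> \<epsilon>" using U \<epsilon> \<open>\<rho> > 0\<close> unfolding modulus_uc_def by auto
  ultimately obtain h where "h > 0" "\<And>s. \<rho> \<le> s \<Longrightarrow> s < \<rho> + h \<Longrightarrow> \<delta> \<rho> \<epsilon> - \<delta> \<rho> \<epsilon> / 2 < \<delta> s \<epsilon>"
    using \<epsilon> \<open>\<rho> > 0\<close> unfolding lsc_right_modulus_def by (meson half_gt_zero)
  then show ?thesis using pos that[of "\<delta> \<rho> \<epsilon> / 2" h] by force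
qed

lemma uniformly_convex_far_midpoint:
  assumes U: "modulus_uc TYPE('a::metric_space) \<delta>" and M: "monotone_modulus \<delta> \<or> lsc_right_modulus \<delta>"
    and "\<rho> \<ge> 0" "\<epsilon> > 0"
  obtains \<eta> where "\<eta> > 0"
    "\<And>a x y m :: 'a. dist x a \<le> \<rho> + \<eta> \<Longrightarrow> dist y a \<le> \<rho> + \<eta> \<Longrightarrow> is_midpoint m x y
       \<Longrightarrow> \<rho> - \<eta> \<le> dist m a \<Longrightarrow> dist x y < \<epsilon>"
proof (cases "\<rho> = 0")
  case True
  have "dist x y < \<epsilon>" if "dist x a \<le> \<epsilon> / 3" "dist y a \<le> \<epsilon> / 3" for a x y :: 'a
    using dist_triangle[of x y a] that \<open>\<epsilon> > 0\<close> by (simp add: dist_commute)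
  then show ?thesis using that[of "\<epsilon> / 3"] True \<open>\<epsilon> > 0\<close> by auto
next
  case False
  then have "\<rho> > 0" using \<open>\<rho> \<ge> 0\<close> by simp
  define \<epsilon>' where "\<epsilon>' = min 2 (\<epsilon> / (\<rho> + 1))"
  have \<epsilon>': "\<epsilon>' \<in> {0<..2}" using \<open>\<rho> > 0\<close> \<open>\<epsilon> > 0\<close> unfolding \<epsilon>'_def by auto
  obtain d h where d: "d > 0" "h > 0" "\<And>s. \<rho> \<le> s \<Longrightarrow> s < \<rho> + h \<Longrightarrow> d \<le> \<delta> s \<epsilon>'"
    using modulus_uc_bounded_below_right[OF U M \<open>\<rho> > 0\<close> \<epsilon>'] by blast
  define \<eta> where "\<eta> = min (h / 2) (min 1 (d * \<rho> / 4))"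
  have \<eta>: "\<eta> > 0" "\<eta> < h" "\<eta> \<le> 1" "\<eta> \<le> d * \<rho> / 4"
    using d \<open>\<rho> > 0\<close> unfolding \<eta>_def by auto
  have "dist x y < \<epsilon>"
    if xa: "dist x a \<le> \<rho> + \<eta>" and ya: "dist y a \<le> \<rho> + \<eta>" and m: "is_midpoint m x y"
      and ma: "\<rho> - \<eta> \<le> dist m a" for a x y m :: 'a
  proof (rule ccontr)
    assume "\<not> dist x y < \<epsilon>"
    define s where "s = \<rho> + \<eta>"
    have s: "s > 0" "\<rho> \<le> s" "s < \<rho> + h" "s \<le> \<rho> + 1" using \<eta> \<open>\<rho> > 0\<close> unfolding s_def by auto
    have "\<epsilon>' * s \<le> \<epsilon> / (\<rho> + 1) * (\<rho> + 1)"
      using s \<epsilon>' unfolding \<epsilon>'_def by (intro mult_mono) auto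
    also have "\<dots> \<le> dist x y" using \<open>\<rho> > 0\<close> \<open>\<not> dist x y < \<epsilon>\<close> by simp
    finally have "dist m a \<le> (1 - \<delta> s \<epsilon>') * s"
      using U s \<epsilon>' xa ya m unfolding modulus_uc_def s_def by blast
    also have "\<dots> \<le> (1 - d) * s" using d(3) s by (intro mult_right_mono) auto
    also have "\<dots> < \<rho> - \<eta>"
    proof -
      have "(1 - d) * s = \<rho> + \<eta> - d * \<rho> - d * \<eta>" by (simp add: s_def algebra_simps)
      moreover have "0 < d * \<rho>" "0 < d * \<eta>" using d(1) \<open>\<rho> > 0\<close> \<eta>(1) by simp_all
      ultimately show ?thesis using \<eta>(4) by linarith
    qed
    finally show False using ma by linarith
  qed
  then show ?thesis using that \<eta>(1) by blast
qed

lemma Cauchy_nested_geo_convex: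
  fixes K :: "nat \<Rightarrow> 'a::metric_space set"
  assumes G: "geodesic_space TYPE('a)" and U: "modulus_uc TYPE('a) \<delta>"
    and M: "monotone_modulus \<delta> \<or> lsc_right_modulus \<delta>"
    and "\<rho> \<ge> 0" and dec: "decseq K" and cv: "\<And>n. geo_convex (K n)" and p: "\<And>n. p n \<in> K n"
    and near: "\<And>\<eta>. \<eta> > 0 \<Longrightarrow> \<exists>N. (\<forall>n\<ge>N. dist (p n) a \<le> \<rho> + \<eta>) \<and> (\<forall>q\<in>K N. \<rho> - \<eta> \<le> dist q a)"
  shows "Cauchy p"
proof (rule metric_CauchyI)
  fix e :: real assume "e > 0"
  obtain \<eta> where "\<eta> > 0" and uc: "\<And>x y m. dist x a \<le> \<rho> + \<eta> \<Longrightarrow> dist y a \<le> \<rho> + \<eta>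
      \<Longrightarrow> is_midpoint m x y \<Longrightarrow> \<rho> - \<eta> \<le> dist m a \<Longrightarrow> dist x y < e"
    using uniformly_convex_far_midpoint[OF U M \<open>\<rho> \<ge> 0\<close> \<open>e > 0\<close>] by metis
  then obtain N where N: "\<forall>n\<ge>N. dist (p n) a \<le> \<rho> + \<eta>" "\<forall>q\<in>K N. \<rho> - \<eta> \<le> dist q a"
    using near by blast
  have "dist (p m) (p n) < e" if "m \<ge> N" "n \<ge> N" for m n
  proof -
    have "p m \<in> K N" "p n \<in> K N" using p dec[THEN decseqD] that by blast+
    then obtain q where "q \<in> K N" "is_midpoint q (p m) (p n)"
      using geo_convex_midpoint[OF G cv] by metis
    then show ?thesis using uc N that by blast
  qed
  then show "\<exists>N. \<forall>m\<ge>N. \<forall>n\<ge>N. dist (p m) (p n) < e" by blast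
qed

lemma infdist_decseq:
  assumes "decseq K" "\<And>n. K n \<noteq> {}" "bounded (K 0)"
  shows "incseq (\<lambda>n. infdist a (K n))" "(\<lambda>n. infdist a (K n)) \<longlonglongrightarrow> (SUP n. infdist a (K n))"
proof -
  show inc: "incseq (\<lambda>n. infdist a (K n))"
    using assms(1,2) by (auto intro!: monoI infdist_mono simp: decseq_def)
  obtain E where E: "\<forall>y\<in>K 0. dist a y \<le> E" using assms(3) bounded_any_center by blast
  have "infdist a (K n) \<le> E" for n
  proof -
    obtain b where "b \<in> K n" using assms(2) by blast
    then show ?thesis using E assms(1)[THEN decseqD, of 0 n] infdist_le[of b "K n" a] by fastforce
  qed
  then have "bdd_above (range (\<lambda>n. infdist a (K n)))" by (rule bdd_aboveI2)
  then show "(\<lambda>n. infdist a (K n)) \<longlonglongrightarrow> (SUP n. infdist a (K n))" using inc by (rule LIMSEQ_incseq_SUP)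
qed

lemma Inter_decseq_geo_convex_nonempty:
  fixes K :: "nat \<Rightarrow> 'a::complete_space set"
  assumes G: "geodesic_space TYPE('a)" and U: "modulus_uc TYPE('a) \<delta>"
    and M: "monotone_modulus \<delta> \<or> lsc_right_modulus \<delta>"
    and ne: "\<And>n. K n \<noteq> {}" and cl: "\<And>n. closed (K n)" and cv: "\<And>n. geo_convex (K n)"
    and dec: "decseq K" and bd: "bounded (K 0)"
  shows "(\<Inter>n. K n) \<noteq> {}"
proof -
  obtain a where "a \<in> K 0" using ne by blast
  define r where "r n = infdist a (K n)" for n
  have "incseq r" and r_lim: "r \<longlonglongrightarrow> (SUP n. r n)"
    unfolding r_def using infdist_decseq[OF dec ne bd] by blast+
  define \<rho> where "\<rho> = (SUP n. r n)"
  have r_le: "r n \<le> \<rho>" for n using incseq_le[OF \<open>incseq r\<close> r_lim] unfolding \<rho>_def .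
  have "\<exists>p. p \<in> K n \<and> dist a p < r n + inverse (real (Suc n))" for n
    using infdist_ltE[OF _ ne] unfolding r_def by (metis less_add_same_cancel1 positive_imp_inverse_positive
        of_nat_0_less_iff zero_less_Suc)
  then obtain p where p: "\<And>n. p n \<in> K n" "\<And>n. dist a (p n) < r n + inverse (real (Suc n))"
    by metis
  have "0 \<le> \<rho>" using r_le[of 0] infdist_nonneg[of a] unfolding r_def by (meson order_trans)
  moreover have "\<exists>N. (\<forall>n\<ge>N. dist (p n) a \<le> \<rho> + \<eta>) \<and> (\<forall>q\<in>K N. \<rho> - \<eta> \<le> dist q a)"
    if "\<eta> > 0" for \<eta>
  proof -
    have "\<forall>\<^sub>F n in sequentially. \<rho> - \<eta> < r n \<and> inverse (real (Suc n)) < \<eta>"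
      using order_tendstoD(1)[OF r_lim] order_tendstoD(2)[OF LIMSEQ_inverse_real_of_nat] that
      unfolding \<rho>_def by (auto intro: eventually_conj)
    then obtain N where N: "\<forall>n\<ge>N. \<rho> - \<eta> < r n \<and> inverse (real (Suc n)) < \<eta>"
      unfolding eventually_sequentially by blast
    have "dist (p n) a \<le> \<rho> + \<eta>" if "n \<ge> N" for n
      using p(2)[of n] r_le[of n] N that by (smt (verit) dist_commute)
    moreover have "\<rho> - \<eta> \<le> dist q a" if "q \<in> K N" for q
      using N infdist_le[OF that, of a] unfolding r_def by (fastforce simp: dist_commute)
    ultimately show ?thesis by blast
  qed
  ultimately have "Cauchy p" by (rule Cauchy_nested_geo_convex[OF G U M _ dec cv p(1)])
  then obtain L where L: "p \<longlonglongrightarrow> L" using Cauchy_convergent_iff convergent_def by blast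
  have "L \<in> K n" for n
  proof -
    have "p (k + n) \<in> K n" for k using p(1) dec[THEN decseqD] by (metis le_add2 subsetD)
    then show ?thesis by (rule closed_sequentially[OF cl _ LIMSEQ_ignore_initial_segment[OF L]])
  qed
  then show ?thesis by blast
qed

lemma geo_quasiconvex_on_attains_min:
  fixes K :: "'a::complete_space set" and f :: "'a \<Rightarrow> real"
  assumes G: "geodesic_space TYPE('a)" and U: "modulus_uc TYPE('a) \<delta>"
    and M: "monotone_modulus \<delta> \<or> lsc_right_modulus \<delta>"
    and "K \<noteq> {}" "closed K" "geo_convex K" "bounded K"
    and "continuous_on K f" "geo_quasiconvex_on K f" "bdd_below (f ` K)"
  obtains x where "x \<in> K" "\<And>y. y \<in> K \<Longrightarrow> f x \<le> f y"
proof -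
  define m where "m = Inf (f ` K)"
  define L where "L n = {x\<in>K. f x \<le> m + inverse (real (Suc n))}" for n
  have "(\<Inter>n. L n) \<noteq> {}"
  proof (rule Inter_decseq_geo_convex_nonempty[OF G U M])
    show "L n \<noteq> {}" for n
      using cInf_lessD[of "f ` K" "m + inverse (real (Suc n))"] \<open>K \<noteq> {}\<close> unfolding L_def m_def
      by fastforce
    show "closed (L n)" for n
      unfolding L_def using assms(5,8) by (intro continuous_on_closed_Collect_le continuous_on_const)
    show "geo_convex (L n)" for n
      unfolding L_def using assms(6,9) by (rule geo_convex_sublevel)
    have "inverse (real (Suc n)) \<le> inverse (real (Suc k))" if "k \<le> n" for k n
      using that by (simp add: le_imp_inverse_le)
    then show "decseq L"
      unfolding L_def decseq_def by (force intro: order_trans add_left_mono)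
    show "bounded (L 0)" unfolding L_def using assms(7) by (rule bounded_subset) auto
  qed
  then obtain x where x: "\<And>n. x \<in> L n" by blast
  have "f x \<le> m"
  proof (rule field_le_epsilon)
    fix e :: real assume "e > 0"
    then obtain n where "inverse (real (Suc n)) < e" using reals_Archimedean by blast
    then show "f x \<le> m + e" using x[of n] unfolding L_def by simp
  qed
  moreover have "m \<le> f y" if "y \<in> K" for y
    unfolding m_def using assms(10) that by (simp add: cInf_lower)
  ultimately show ?thesis using that x[of 0] unfolding L_def by fastforce
qed

text \<open>The limit superior of dist z (xs n), written as the infimum of its eventual upper bounds
  because real is not a complete lattice.\<close>
definition asymptotic_radius :: "(nat \<Rightarrow> 'a::metric_space) \<Rightarrow> 'a \<Rightarrow> real" where
  "asymptotic_radius xs z = Inf {r. \<forall>\<^sub>F n in sequentially. dist z (xs n) \<le> r}"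

lemma asymptotic_radius_le:
  assumes "\<forall>\<^sub>F n in sequentially. dist z (xs n) \<le> r"
  shows "asymptotic_radius xs z \<le> r"
proof -
  have "0 \<le> r'" if ev: "\<forall>\<^sub>F n in sequentially. dist z (xs n) \<le> r'" for r'
  proof -
    obtain n where "dist z (xs n) \<le> r'" using eventually_happens'[OF sequentially_bot ev] by blast
    then show ?thesis using zero_le_dist[of z "xs n"] by linarith
  qed
  then have "bdd_below {r. \<forall>\<^sub>F n in sequentially. dist z (xs n) \<le> r}"
    by (intro bdd_belowI[of _ 0]) simp
  then show ?thesis unfolding asymptotic_radius_def by (rule cInf_lower[rotated]) (simp add: assms)
qed

lemma eventually_dist_le_asymptotic_radius:
  assumes "bounded (range xs)" "asymptotic_radius xs z < r"
  shows "\<forall>\<^sub>F n in sequentially. dist z (xs n) \<le> r"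
proof -
  obtain e where "\<forall>y\<in>range xs. dist z y \<le> e" using assms(1) bounded_any_center by blast
  then have "e \<in> {r. \<forall>\<^sub>F n in sequentially. dist z (xs n) \<le> r}" by simp
  then obtain s where "\<forall>\<^sub>F n in sequentially. dist z (xs n) \<le> s" "s < r"
    using cInf_lessD[of _ r] assms(2) unfolding asymptotic_radius_def by (metis empty_iff mem_Collect_eq)
  then show ?thesis by (auto elim: eventually_mono)
qed

lemma asymptotic_radius_nonneg:
  assumes "bounded (range xs)"
  shows "0 \<le> asymptotic_radius xs z"
proof (rule ccontr)
  assume neg: "\<not> 0 \<le> asymptotic_radius xs z"
  then have "\<forall>\<^sub>F n in sequentially. dist z (xs n) \<le> asymptotic_radius xs z / 2"
    by (intro eventually_dist_le_asymptotic_radius[OF assms]) simp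
  then obtain n where "dist z (xs n) \<le> asymptotic_radius xs z / 2"
    using eventually_happens'[OF sequentially_bot] by blast
  then show False using neg zero_le_dist[of z "xs n"] by linarith
qed

lemma asymptotic_radius_const [simp]: "asymptotic_radius (\<lambda>_. y) z = dist z y"
  unfolding asymptotic_radius_def by (simp add: atLeast_def[symmetric])

lemma asymptotic_radius_le_add_dist:
  assumes "bounded (range xs)"
  shows "asymptotic_radius xs z \<le> asymptotic_radius xs w + dist z w"
proof (rule field_le_epsilon)
  fix e :: real assume "e > 0"
  then have "\<forall>\<^sub>F n in sequentially. dist w (xs n) \<le> asymptotic_radius xs w + e"
    by (intro eventually_dist_le_asymptotic_radius[OF assms]) simp
  then have "\<forall>\<^sub>F n in sequentially. dist z (xs n) \<le> asymptotic_radius xs w + e + dist z w"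
  proof (rule eventually_mono)
    fix n assume "dist w (xs n) \<le> asymptotic_radius xs w + e"
    then show "dist z (xs n) \<le> asymptotic_radius xs w + e + dist z w"
      using dist_triangle[of z "xs n" w] by linarith
  qed
  then show "asymptotic_radius xs z \<le> asymptotic_radius xs w + dist z w + e"
    using asymptotic_radius_le by fastforce
qed

lemma continuous_on_asymptotic_radius:
  assumes "bounded (range xs)"
  shows "continuous_on S (asymptotic_radius xs)"
proof (rule lipschitz_on_continuous_on[of 1], rule lipschitz_onI)
  fix z w
  show "dist (asymptotic_radius xs z) (asymptotic_radius xs w) \<le> 1 * dist z w"
    using asymptotic_radius_le_add_dist[OF assms, of z w] asymptotic_radius_le_add_dist[OF assms, of w z]
    by (simp add: dist_real_def dist_commute abs_le_iff)
qed simp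

lemma bounded_asymptotic_radius_sublevel:
  assumes "bounded (range xs)"
  shows "bounded {z. asymptotic_radius xs z \<le> r}"
proof -
  obtain a e where e: "\<forall>n. dist a (xs n) \<le> e" using assms unfolding bounded_def by blast
  have "dist a z \<le> e + (r + 1)" if "asymptotic_radius xs z \<le> r" for z
  proof -
    have "\<forall>\<^sub>F n in sequentially. dist z (xs n) \<le> r + 1"
      using that by (intro eventually_dist_le_asymptotic_radius[OF assms]) simp
    then obtain n where "dist z (xs n) \<le> r + 1" using eventually_happens'[OF sequentially_bot] by blast
    then show ?thesis using e[rule_format, of n] dist_triangle2[of a z "xs n"] by linarith
  qed
  then show ?thesis unfolding bounded_def by blast
qed

lemma geo_quasiconvex_on_asymptotic_radius:
  assumes "busemann_convex TYPE('a::metric_space)" "bounded (range (xs :: nat \<Rightarrow> 'a))"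
  shows "geo_quasiconvex_on S (asymptotic_radius xs)"
  unfolding geo_quasiconvex_on_def
proof (intro ballI allI impI)
  fix z1 z2 and c :: "real \<Rightarrow> 'a" and l s
  assume g: "geodesic_between c l z1 z2" and s: "s \<in> {0..l}"
  show "asymptotic_radius xs (c s) \<le> max (asymptotic_radius xs z1) (asymptotic_radius xs z2)"
  proof (rule field_le_epsilon)
    fix e :: real assume "e > 0"
    define r where "r = max (asymptotic_radius xs z1) (asymptotic_radius xs z2) + e"
    have "\<forall>\<^sub>F n in sequentially. dist z1 (xs n) \<le> r \<and> dist z2 (xs n) \<le> r"
      using \<open>e > 0\<close> unfolding r_def
      by (intro eventually_conj eventually_dist_le_asymptotic_radius[OF assms(2)]) auto
    then have "\<forall>\<^sub>F n in sequentially. dist (c s) (xs n) \<le> r"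
    proof (rule eventually_mono)
      fix n assume "dist z1 (xs n) \<le> r \<and> dist z2 (xs n) \<le> r"
      moreover obtain s' :: real where "dist (c s) (xs n) \<le> max (dist z1 (xs n)) (dist z2 (xs n))"
        using busemann_convex_geodesics_close[OF assms(1) g geodesic_between_const s] by metis
      ultimately show "dist (c s) (xs n) \<le> r" by linarith
    qed
    then show "asymptotic_radius xs (c s) \<le> max (asymptotic_radius xs z1) (asymptotic_radius xs z2) + e"
      unfolding r_def by (rule asymptotic_radius_le)
  qed
qed

lemma asymptotic_radius_image_le:
  assumes "bounded (range xs)" "\<And>n. dist (T z) (xs (Suc n)) \<le> dist z (xs n)"
  shows "asymptotic_radius xs (T z) \<le> asymptotic_radius xs z"
proof (rule field_le_epsilon)
  fix e :: real assume "e > 0"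
  then have "\<forall>\<^sub>F n in sequentially. dist z (xs n) \<le> asymptotic_radius xs z + e"
    by (intro eventually_dist_le_asymptotic_radius[OF assms(1)]) simp
  then have "\<forall>\<^sub>F n in sequentially. dist (T z) (xs (Suc n)) \<le> asymptotic_radius xs z + e"
    by (rule eventually_mono) (use assms(2) order_trans in blast)
  then show "asymptotic_radius xs (T z) \<le> asymptotic_radius xs z + e"
    using eventually_sequentially_Suc[of "\<lambda>n. dist (T z) (xs n) \<le> asymptotic_radius xs z + e"]
    by (simp add: asymptotic_radius_le)
qed

lemma asymptotic_center_exists:
  fixes K :: "'a::complete_space set"
  assumes G: "geodesic_space TYPE('a)" and Bu: "busemann_convex TYPE('a)"
    and U: "modulus_uc TYPE('a) \<delta>" and M: "monotone_modulus \<delta> \<or> lsc_right_modulus \<delta>"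
    and "K \<noteq> {}" "closed K" "geo_convex K" and xs: "bounded (range xs)"
  obtains y where "y \<in> K" "\<And>w. w \<in> K \<Longrightarrow> asymptotic_radius xs y \<le> asymptotic_radius xs w"
proof -
  let ?r = "asymptotic_radius xs"
  obtain k where "k \<in> K" using \<open>K \<noteq> {}\<close> by blast
  define L where "L = {z\<in>K. ?r z \<le> ?r k}"
  have cont: "continuous_on S ?r" for S by (rule continuous_on_asymptotic_radius[OF xs])
  have qc: "geo_quasiconvex_on S ?r" for S by (rule geo_quasiconvex_on_asymptotic_radius[OF Bu xs])
  obtain y where y: "y \<in> L" "\<And>w. w \<in> L \<Longrightarrow> ?r y \<le> ?r w"
  proof (rule geo_quasiconvex_on_attains_min[OF G U M, of L ?r])
    show "L \<noteq> {}" using \<open>k \<in> K\<close> unfolding L_def by blast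
    show "closed L" unfolding L_def
      using cont \<open>closed K\<close> by (intro continuous_on_closed_Collect_le continuous_on_const)
    show "geo_convex L" unfolding L_def using \<open>geo_convex K\<close> qc by (rule geo_convex_sublevel)
    show "bounded L" unfolding L_def
      by (rule bounded_subset[OF bounded_asymptotic_radius_sublevel[OF xs]]) blast
    show "bdd_below (?r ` L)" by (rule bdd_belowI2[of _ 0]) (rule asymptotic_radius_nonneg[OF xs])
  qed (use cont qc in auto)
  have "?r y \<le> ?r w" if "w \<in> K" for w
  proof (cases "w \<in> L")
    case False
    then have "?r k < ?r w" using that unfolding L_def by auto
    moreover have "?r y \<le> ?r k" using y(2) \<open>k \<in> K\<close> unfolding L_def by blast
    ultimately show ?thesis by linarith
  qed (rule y(2))
  then show ?thesis using that y(1) unfolding L_def by blast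
qed

lemma asymptotic_center_unique:
  fixes K :: "'a::metric_space set"
  assumes G: "geodesic_space TYPE('a)" and U: "modulus_uc TYPE('a) \<delta>"
    and M: "monotone_modulus \<delta> \<or> lsc_right_modulus \<delta>"
    and "geo_convex K" and xs: "bounded (range xs)" and "y1 \<in> K" "y2 \<in> K"
    and min1: "\<And>w. w \<in> K \<Longrightarrow> asymptotic_radius xs y1 \<le> asymptotic_radius xs w"
    and min2: "\<And>w. w \<in> K \<Longrightarrow> asymptotic_radius xs y2 \<le> asymptotic_radius xs w"
  shows "y1 = y2"
proof (rule ccontr)
  assume "y1 \<noteq> y2"
  define \<rho> where "\<rho> = asymptotic_radius xs y1"
  have \<rho>2: "asymptotic_radius xs y2 = \<rho>"
    using min1[OF \<open>y2 \<in> K\<close>] min2[OF \<open>y1 \<in> K\<close>] unfolding \<rho>_def by linarith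
  have \<rho>0: "0 \<le> \<rho>" unfolding \<rho>_def by (rule asymptotic_radius_nonneg[OF xs])
  have \<epsilon>0: "0 < dist y1 y2" using \<open>y1 \<noteq> y2\<close> by simp
  obtain \<eta> where "\<eta> > 0" and uc: "\<And>a x y m :: 'a. dist x a \<le> \<rho> + \<eta> \<Longrightarrow> dist y a \<le> \<rho> + \<eta>
      \<Longrightarrow> is_midpoint m x y \<Longrightarrow> \<rho> - \<eta> \<le> dist m a \<Longrightarrow> dist x y < dist y1 y2"
    using uniformly_convex_far_midpoint[OF U M \<rho>0 \<epsilon>0] by metis
  obtain q where "q \<in> K" and mid: "is_midpoint q y1 y2"
    using geo_convex_midpoint[OF G \<open>geo_convex K\<close> \<open>y1 \<in> K\<close> \<open>y2 \<in> K\<close>] by blast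
  have "\<forall>\<^sub>F n in sequentially. dist y1 (xs n) \<le> \<rho> + \<eta>"
    by (rule eventually_dist_le_asymptotic_radius[OF xs]) (simp add: \<rho>_def \<open>\<eta> > 0\<close>)
  moreover have "\<forall>\<^sub>F n in sequentially. dist y2 (xs n) \<le> \<rho> + \<eta>"
    by (rule eventually_dist_le_asymptotic_radius[OF xs]) (simp add: \<rho>2 \<open>\<eta> > 0\<close>)
  ultimately have "\<forall>\<^sub>F n in sequentially. dist y1 (xs n) \<le> \<rho> + \<eta> \<and> dist y2 (xs n) \<le> \<rho> + \<eta>"
    by (rule eventually_conj)
  then obtain N where N: "\<And>n. n \<ge> N \<Longrightarrow> dist y1 (xs n) \<le> \<rho> + \<eta> \<and> dist y2 (xs n) \<le> \<rho> + \<eta>"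
    unfolding eventually_sequentially by blast
  have "\<not> (\<forall>n\<ge>N. dist q (xs n) \<le> \<rho> - \<eta>)"
  proof
    assume "\<forall>n\<ge>N. dist q (xs n) \<le> \<rho> - \<eta>"
    then have "\<forall>\<^sub>F n in sequentially. dist q (xs n) \<le> \<rho> - \<eta>"
      unfolding eventually_sequentially by blast
    then have "asymptotic_radius xs q \<le> \<rho> - \<eta>" by (rule asymptotic_radius_le)
    then show False using min1[OF \<open>q \<in> K\<close>] \<open>\<eta> > 0\<close> unfolding \<rho>_def by linarith
  qed
  then obtain n where "n \<ge> N" "\<not> dist q (xs n) \<le> \<rho> - \<eta>" by blast
  then have "dist y1 y2 < dist y1 y2"
    using N[OF \<open>n \<ge> N\<close>] by (intro uc[OF _ _ mid]) auto
  then show False by simp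
qed

lemma asymptotic_center_fixed_point:
  fixes K :: "'a::complete_space set"
  assumes G: "geodesic_space TYPE('a)" and Bu: "busemann_convex TYPE('a)"
    and U: "modulus_uc TYPE('a) \<delta>" and M: "monotone_modulus \<delta> \<or> lsc_right_modulus \<delta>"
    and "K \<noteq> {}" "closed K" "geo_convex K" "T ` K \<subseteq> K" and xs: "bounded (range xs)"
    and step: "\<And>z n. z \<in> K \<Longrightarrow> dist (T z) (xs (Suc n)) \<le> dist z (xs n)"
  obtains y where "y \<in> K" "T y = y" "\<And>w. w \<in> K \<Longrightarrow> asymptotic_radius xs y \<le> asymptotic_radius xs w"
proof -
  obtain y where y: "y \<in> K" "\<And>w. w \<in> K \<Longrightarrow> asymptotic_radius xs y \<le> asymptotic_radius xs w"
    using asymptotic_center_exists[OF G Bu U M assms(5-7) xs] by blast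
  have "T y \<in> K" using y(1) \<open>T ` K \<subseteq> K\<close> by blast
  moreover have "asymptotic_radius xs (T y) \<le> asymptotic_radius xs y"
    using asymptotic_radius_image_le[of xs T y, OF xs step[OF y(1)]] .
  ultimately have "T y = y"
    using asymptotic_center_unique[OF G U M \<open>geo_convex K\<close> xs, of "T y" y] y by force
  then show ?thesis using that y by blast
qed

lemma funpow_in_invariant: "T ` S \<subseteq> S \<Longrightarrow> x \<in> S \<Longrightarrow> (T ^^ n) x \<in> S"
  by (induction n) auto

lemma bounded_orbit_relatively_nonexpansive:
  assumes "noncyclic T A B" "relatively_nonexpansive T A B" "bounded B" "B \<noteq> {}" "x \<in> A"
  shows "bounded (range (\<lambda>n. (T ^^ n) x))"
proof -
  obtain b where "b \<in> B" using \<open>B \<noteq> {}\<close> by blast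
  have orbits: "(T ^^ n) x \<in> A" "(T ^^ n) b \<in> B" for n
    using assms(1) \<open>x \<in> A\<close> \<open>b \<in> B\<close> unfolding noncyclic_def by (auto intro: funpow_in_invariant)
  have shadow: "dist ((T ^^ n) x) ((T ^^ n) b) \<le> dist x b" for n
  proof (induction n)
    case (Suc n)
    have "dist ((T ^^ Suc n) x) ((T ^^ Suc n) b) \<le> dist ((T ^^ n) x) ((T ^^ n) b)"
      using assms(2) orbits[of n] unfolding relatively_nonexpansive_def by simp
    then show ?case using Suc.IH by linarith
  qed simp
  obtain E where E: "\<forall>y\<in>B. dist b y \<le> E" using \<open>bounded B\<close> bounded_any_center by blast
  have "dist b ((T ^^ n) x) \<le> E + dist x b" for n
    using dist_triangle[of b "(T ^^ n) x" "(T ^^ n) b"] E orbits(2)[of n] shadow[of n]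
      dist_commute[of "(T ^^ n) b" "(T ^^ n) x"] by force
  then show ?thesis unfolding bounded_def by blast
qed

lemma infdist_image_le_relatively_nonexpansive:
  assumes "relatively_nonexpansive T A B" "T ` A \<subseteq> A" "z \<in> B"
  shows "infdist (T z) A \<le> infdist z A"
proof (cases "A = {}")
  case False
  have "infdist (T z) A \<le> dist z a" if "a \<in> A" for a
  proof -
    have "infdist (T z) A \<le> dist (T z) (T a)" using assms(2) that by (intro infdist_le) blast
    also have "\<dots> \<le> dist z a"
      using assms(1,3) that unfolding relatively_nonexpansive_def by (simp add: dist_commute)
    finally show ?thesis .
  qed
  then have "infdist (T z) A \<le> (INF a\<in>A. dist z a)" by (intro cINF_greatest[OF False])
  then show ?thesis by (metis infdist_notempty[OF False])
qed (simp add: infdist_def)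

lemma setdist_eq_infdist_if_minimal:
  assumes "A \<noteq> {}" "y \<in> B" "\<And>w. w \<in> B \<Longrightarrow> infdist y A \<le> infdist w A"
  shows "setdist A B = infdist y A"
proof (rule order_antisym)
  show "setdist A B \<le> infdist y A"
    using setdist_le_sing[OF \<open>y \<in> B\<close>, of A] by (simp add: setdist_sym infdist_eq_setdist)
  show "infdist y A \<le> setdist A B"
  proof (rule le_setdistI[OF \<open>A \<noteq> {}\<close>])
    show "B \<noteq> {}" using \<open>y \<in> B\<close> by blast
    fix a b assume "a \<in> A" "b \<in> B"
    then show "infdist y A \<le> dist a b"
      using assms(3)[of b] infdist_le[of a A b] dist_commute[of a b] by linarith
  qed
qed

lemma relatively_nonexpansive_fixed_point_in_invariant_subset:
  fixes A B K :: "'a::complete_space set"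
  assumes G: "geodesic_space TYPE('a)" and Bu: "busemann_convex TYPE('a)"
    and U: "modulus_uc TYPE('a) \<delta>" and M: "monotone_modulus \<delta> \<or> lsc_right_modulus \<delta>"
    and T: "noncyclic T A B" "relatively_nonexpansive T A B" and "A \<noteq> {}" "bounded B"
    and "K \<subseteq> B" "K \<noteq> {}" "closed K" "geo_convex K" "T ` K \<subseteq> K"
  obtains y where "y \<in> K" "T y = y"
proof -
  obtain x where "x \<in> A" using \<open>A \<noteq> {}\<close> by blast
  define xs where "xs n = (T ^^ n) x" for n
  have "B \<noteq> {}" using \<open>K \<subseteq> B\<close> \<open>K \<noteq> {}\<close> by blast
  then have xs: "bounded (range xs)" unfolding xs_def
    by (rule bounded_orbit_relatively_nonexpansive[OF T \<open>bounded B\<close> _ \<open>x \<in> A\<close>])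
  have step: "dist (T z) (xs (Suc n)) \<le> dist z (xs n)" if "z \<in> K" for z n
  proof -
    have "xs n \<in> A" "z \<in> B"
      using T(1) \<open>x \<in> A\<close> that \<open>K \<subseteq> B\<close> unfolding xs_def noncyclic_def
      by (auto intro: funpow_in_invariant)
    then have "dist (T (xs n)) (T z) \<le> dist (xs n) z"
      using T(2) unfolding relatively_nonexpansive_def by blast
    then show ?thesis by (simp add: xs_def dist_commute)
  qed
  obtain y where "y \<in> K" "T y = y"
    using asymptotic_center_fixed_point[OF G Bu U M assms(10-13) xs step] by blast
  then show ?thesis by (rule that)
qed

lemma relatively_nonexpansive_nearest_point_fixed:
  fixes A B :: "'a::complete_space set"
  assumes G: "geodesic_space TYPE('a)" and Bu: "busemann_convex TYPE('a)"
    and U: "modulus_uc TYPE('a) \<delta>" and M: "monotone_modulus \<delta> \<or> lsc_right_modulus \<delta>"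
    and "A \<noteq> {}" "closed A" "geo_convex A" "T ` A \<subseteq> A" and T: "relatively_nonexpansive T A B"
    and "y \<in> B" "T y = y"
  obtains x where "x \<in> A" "T x = x" "dist x y = infdist y A"
proof -
  have step: "dist (T z) y \<le> dist z y" if "z \<in> A" for z
    using T that \<open>y \<in> B\<close> \<open>T y = y\<close> unfolding relatively_nonexpansive_def by force
  have "bounded (range (\<lambda>_::nat. y))" by simp
  from asymptotic_center_fixed_point[OF G Bu U M assms(5-8) this step]
  obtain x where x: "x \<in> A" "T x = x" "\<And>w. w \<in> A \<Longrightarrow> dist x y \<le> dist w y"
    by auto
  have "dist x y = infdist y A"
  proof (rule order_antisym)
    show "dist x y \<le> infdist y A"
      unfolding infdist_notempty[OF \<open>A \<noteq> {}\<close>] using x(3)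
      by (intro cINF_greatest[OF \<open>A \<noteq> {}\<close>]) (simp add: dist_commute)
    show "infdist y A \<le> dist x y" using infdist_le[OF x(1), of y] by (simp add: dist_commute)
  qed
  then show ?thesis using that x by blast
qed

lemma relatively_nonexpansive_fixed_point_at_setdist:
  fixes A B :: "'a::complete_space set"
  assumes space: "geodesic_space TYPE('a)" "busemann_convex TYPE('a)"
      "modulus_uc TYPE('a) \<delta>" "monotone_modulus \<delta> \<or> lsc_right_modulus \<delta>"
    and "A \<noteq> {}" "geo_convex A" "B \<noteq> {}" "closed B" "geo_convex B" "bounded B"
    and T: "noncyclic T A B" "relatively_nonexpansive T A B"
  obtains y where "y \<in> B" "T y = y" "infdist y A \<le> setdist A B"
proof -
  let ?g = "\<lambda>y. infdist y A"
  have qc: "geo_quasiconvex_on S ?g" for S by (rule geo_quasiconvex_on_infdist[OF space(1,2) assms(6)])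
  have "continuous_on B ?g" by (intro continuous_intros)
  moreover have "bdd_below (?g ` B)" by (rule bdd_belowI2[of _ 0]) (rule infdist_nonneg)
  ultimately obtain y0 where "y0 \<in> B" "\<And>w. w \<in> B \<Longrightarrow> ?g y0 \<le> ?g w"
    using geo_quasiconvex_on_attains_min[OF space(1,3,4) assms(7-10) _ qc] by blast
  then have dist_AB: "setdist A B = ?g y0" by (rule setdist_eq_infdist_if_minimal[OF assms(5)])
  define B0 where "B0 = {y\<in>B. ?g y \<le> setdist A B}"
  have "B0 \<subseteq> B" "B0 \<noteq> {}" using \<open>y0 \<in> B\<close> dist_AB unfolding B0_def by auto
  moreover have "closed B0" unfolding B0_def
    using \<open>closed B\<close> by (intro continuous_on_closed_Collect_le continuous_intros)
  moreover have "geo_convex B0" unfolding B0_def using \<open>geo_convex B\<close> qc by (rule geo_convex_sublevel)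
  moreover have "T ` B0 \<subseteq> B0"
  proof
    fix z assume "z \<in> T ` B0"
    then obtain y where "y \<in> B0" "z = T y" by blast
    moreover have "T ` A \<subseteq> A" using T(1) unfolding noncyclic_def by blast
    ultimately show "z \<in> B0"
      using T(1) infdist_image_le_relatively_nonexpansive[OF T(2), of y]
      unfolding B0_def noncyclic_def by force
  qed
  ultimately obtain y where "y \<in> B0" "T y = y"
    using relatively_nonexpansive_fixed_point_in_invariant_subset[OF space T \<open>A \<noteq> {}\<close> \<open>bounded B\<close>]
    by blast
  then show ?thesis using that unfolding B0_def by blast
qed

theorem mainTheorem6:
  fixes A B :: "'a::complete_space set" and T :: "'a \<Rightarrow> 'a" and \<delta> :: "real \<Rightarrow> real \<Rightarrow> real"
  assumes "geodesic_space TYPE('a)"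
    and "busemann_convex TYPE('a)"
    and "modulus_uc TYPE('a) \<delta>"
    and "monotone_modulus \<delta> \<or> lsc_right_modulus \<delta>"
    and "A \<noteq> {}" and "B \<noteq> {}"
    and "closed A" and "closed B"
    and "geo_convex A" and "geo_convex B"
    and "bounded B"
    and "noncyclic T A B"
    and "relatively_nonexpansive T A B"
  shows "\<exists>x\<in>A. \<exists>y\<in>B. T x = x \<and> T y = y \<and> dist x y = setdist A B"
proof -
  obtain y where y: "y \<in> B" "T y = y" "infdist y A \<le> setdist A B"
    using relatively_nonexpansive_fixed_point_at_setdist[OF assms(1-5,9,6,8,10,11,12,13)] by blast
  have "T ` A \<subseteq> A" using assms(12) unfolding noncyclic_def by blast
  then obtain x where x: "x \<in> A" "T x = x" "dist x y = infdist y A"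
    using relatively_nonexpansive_nearest_point_fixed[OF assms(1-5,7,9) _ assms(13) y(1,2)] by blast
  moreover have "setdist A B \<le> dist x y" using x(1) y(1) by (rule setdist_le_dist)
  ultimately show ?thesis using y by force
qed

end
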